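(* Let $0.8<t<1$, $P=(0,t)$, $Q=(0,-t)$, $R=\left(\frac{t-1}{t+1},0\right)$, and let $A_1=(1,0)$, $A_2=\left(\frac{t^2-1}{t^2+1},\frac{2t}{t^2+1}\right)$, $A_3=(0,-1)$, $A_4=(0,1)$, $A_5=\left(\frac{t^2-1}{t^2+1},-\frac{2t}{t^2+1}\right)$. If $v\in S^1$ satisfies $\psi_{\triangle PQR}^5(v)=v$, then $v=A_i$ for some $i$ with $1\leq i\leq 5$.
   Context: $D$ is the open unit disk in $\mathbb R^2$ and $S^1$ its boundary circle. For a closed convex $U\subset D$ and $v\in S^1$, $\psi_U(v)$ is the point $w\in S^1\setminus\{v\}$ such that the line $vw$ meets $U$ and $U$ lies in the closed half-plane to the left of the directed line from $v$ to $w$ (the first point counterclockwise from $v$ whose chord from $v$ is tangent to $U$); $\triangle PQR$ denotes the closed filled triangle. *)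

theory Defs
  imports "HOL-Analysis.Analysis"
begin

text \<open>The plane R^2 is identified with the complex numbers: (x,y) corresponds to Complex x y.
  The orientation quantity Im (cnj (w - v) * (p - v)) is the cross product (w - v) x (p - v);
  it is >= 0 iff p lies in the closed half-plane to the left of the directed line from v to w,
  and = 0 iff p lies on the line through v and w.\<close>

definition cross2 :: "complex \<Rightarrow> complex \<Rightarrow> complex \<Rightarrow> real" where
  "cross2 v w p = Im (cnj (w - v) * (p - v))"

definition psi :: "complex set \<Rightarrow> complex \<Rightarrow> complex" where
  "psi U v = (THE w. cmod w = 1 \<and> w \<noteq> v \<and> (\<exists>p\<in>U. cross2 v w p = 0)
                 \<and> (\<forall>p\<in>U. cross2 v w p \<ge> 0))"

definition triangle :: "complex \<Rightarrow> complex \<Rightarrow> complex \<Rightarrow> complex set" where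
  "triangle P Q R = convex hull {P, Q, R}"

end

theory Submission
  imports Defs
begin

text \<open>
  Parametrise the unit circle by \<open>circle_param\<close>, the inverse stereographic projection from
  \<open>(0,-1)\<close>. With \<open>k = (1 - t) / (1 + t)\<close>, the second endpoint of the chord from \<open>circle_param u\<close>
  through \<open>P\<close>, \<open>Q\<close> or \<open>R\<close> has parameter \<open>-k/u\<close>, \<open>-1/(k u)\<close> or \<open>(1 - k u)/(k - u)\<close>,
  and which of these three chords is the one defining \<open>\<psi>\<close> is decided by the signs of two
  quadratics in \<open>u\<close>. Away from the parameters \<open>-1, 0, k, 1/k\<close> of the listed points,
  \<open>\<psi>\<close> maps the arcs \<open>(-1,0) \<rightarrow> (k,1/k) \<rightarrow> (-\<infinity>,-1) \<rightarrow> (0,k) \<rightarrow> (1/k,\<infinity>) \<rightarrow> (-1,0)\<close>, so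
  a point of period 5 can be moved into \<open>(-1,0)\<close>. There \<open>\<psi>\<^sup>5\<close> is one of four compositions
  of the three involutions, and for \<open>k < 1/9\<close> (that is, \<open>t > 0.8\<close>) none of them has a fixed
  point compatible with the sign conditions that select it.
\<close>

lemma cross2_scaleR:
  assumes "p - v = c *\<^sub>R (w - v)"
  shows cross2_scaleR_right: "cross2 v q p = c * cross2 v q w"
    and cross2_scaleR_left: "cross2 v p q = c * cross2 v w q"
proof -
  have p: "p = v + c *\<^sub>R (w - v)" using assms by (simp add: algebra_simps)
  show "cross2 v q p = c * cross2 v q w" "cross2 v p q = c * cross2 v w q"
    unfolding cross2_def p by (simp_all add: scaleR_conv_of_real algebra_simps)
qed

lemma cross2_antisym: "cross2 v p q = - cross2 v q p"
  unfolding cross2_def by (simp add: algebra_simps)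

lemma cross2_self [simp]: "cross2 v p p = 0"
  unfolding cross2_def by (simp add: algebra_simps)

lemma chord_point_param:
  assumes v: "cmod v = 1" and w: "cmod w = 1" "w \<noteq> v" and p: "cross2 v w p = 0"
  obtains \<mu> where "p - v = \<mu> *\<^sub>R (w - v)"
    and "(cmod p)\<^sup>2 = 1 + (\<mu>\<^sup>2 - \<mu>) * (cmod (w - v))\<^sup>2"
proof -
  define d where "d = w - v"
  define \<mu> where "\<mu> = Re (cnj d * (p - v)) / (cmod d)\<^sup>2"
  have d0: "cmod d \<noteq> 0" using w(2) unfolding d_def by simp
  have "cnj d * (p - v) = of_real (Re (cnj d * (p - v)))"
    using p unfolding cross2_def d_def by (simp add: complex_eq_iff)
  then have "(cmod d)\<^sup>2 * (p - v) = Re (cnj d * (p - v)) * d"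
    by (metis complex_norm_square mult.commute mult.left_commute)
  then have pv: "p - v = \<mu> *\<^sub>R d"
    using d0 unfolding \<mu>_def by (simp add: scaleR_conv_of_real field_simps)
  have V: "(Re v)\<^sup>2 + (Im v)\<^sup>2 = 1"
    using v unfolding cmod_def by simp
  have "(cmod (v + d))\<^sup>2 = 1" using w(1) unfolding d_def by simp
  then have vd: "2 * (Re v * Re d + Im v * Im d) = - (cmod d)\<^sup>2"
    using V unfolding cmod_power2 by (simp add: power2_eq_square algebra_simps)
  have "(cmod p)\<^sup>2 = (Re v)\<^sup>2 + (Im v)\<^sup>2 + \<mu> * (2 * (Re v * Re d + Im v * Im d)) + \<mu>\<^sup>2 * (cmod d)\<^sup>2"
    using pv[unfolded diff_eq_eq] unfolding cmod_power2 by (simp add: power2_eq_square algebra_simps)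
  then have "(cmod p)\<^sup>2 = 1 + (\<mu>\<^sup>2 - \<mu>) * (cmod d)\<^sup>2"
    unfolding V vd by (simp add: algebra_simps)
  with pv show thesis using that unfolding d_def by blast
qed

lemma chord_interior_point:
  assumes v: "cmod v = 1" and w: "cmod w = 1" "w \<noteq> v"
    and p: "cmod p < 1" "cross2 v w p = 0"
  obtains \<mu> where "0 < \<mu>" "\<mu> < 1" "p - v = \<mu> *\<^sub>R (w - v)"
proof -
  obtain \<mu> where pv: "p - v = \<mu> *\<^sub>R (w - v)"
    and np: "(cmod p)\<^sup>2 = 1 + (\<mu>\<^sup>2 - \<mu>) * (cmod (w - v))\<^sup>2"
    using chord_point_param[OF v w p(2)] .
  have "(cmod p)\<^sup>2 < 1" using p(1) by (simp add: power_less_one_iff)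
  with np have "(\<mu>\<^sup>2 - \<mu>) * (cmod (w - v))\<^sup>2 < 0" by linarith
  moreover have "0 < (cmod (w - v))\<^sup>2" using w(2) by simp
  ultimately have "\<mu> * (\<mu> - 1) < 0"
    by (simp add: mult_less_0_iff power2_eq_square right_diff_distrib)
  then have "0 < \<mu>" "\<mu> < 1" by (auto simp: mult_less_0_iff)
  with pv that show thesis by blast
qed

lemma chord_circle_point:
  assumes v: "cmod v = 1" and w: "cmod w = 1" "w \<noteq> v"
    and p: "cmod p = 1" "cross2 v w p = 0"
  shows "p = v \<or> p = w"
proof -
  obtain \<mu> where pv: "p - v = \<mu> *\<^sub>R (w - v)"
    and np: "(cmod p)\<^sup>2 = 1 + (\<mu>\<^sup>2 - \<mu>) * (cmod (w - v))\<^sup>2"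
    using chord_point_param[OF v w p(2)] .
  from np p(1) w(2) have "\<mu> * (\<mu> - 1) = 0" by (simp add: power2_eq_square algebra_simps)
  then have "\<mu> = 0 \<or> \<mu> = 1" by simp
  with pv show ?thesis by auto
qed

lemma psi_eqI:
  assumes U: "U \<subseteq> ball 0 1" and v: "cmod v = 1" and w: "cmod w = 1" "w \<noteq> v"
    and p: "p \<in> U" "cross2 v w p = 0" and left: "\<forall>q\<in>U. 0 \<le> cross2 v w q"
  shows "psi U v = w"
  unfolding psi_def
proof (rule the_equality)
  show "cmod w = 1 \<and> w \<noteq> v \<and> (\<exists>p\<in>U. cross2 v w p = 0) \<and> (\<forall>p\<in>U. 0 \<le> cross2 v w p)"
    using w p left by blast
next
  fix w'
  assume "cmod w' = 1 \<and> w' \<noteq> v \<and> (\<exists>p\<in>U. cross2 v w' p = 0) \<and> (\<forall>p\<in>U. 0 \<le> cross2 v w' p)"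
  then obtain p' where w': "cmod w' = 1" "w' \<noteq> v" and p': "p' \<in> U" "cross2 v w' p' = 0"
    and left': "\<forall>q\<in>U. 0 \<le> cross2 v w' q" by blast
  have "cmod p < 1" "cmod p' < 1" using p(1) p'(1) U by auto
  then obtain \<mu> \<mu>' where "0 < \<mu>" "p - v = \<mu> *\<^sub>R (w - v)"
    and "0 < \<mu>'" "p' - v = \<mu>' *\<^sub>R (w' - v)"
    using chord_interior_point[OF v w _ p(2)] chord_interior_point[OF v w' _ p'(2)] by metis
  then have "0 \<le> cross2 v w' w" "0 \<le> cross2 v w w'"
    using left[rule_format, OF p'(1)] left'[rule_format, OF p(1)]
    by (auto simp: cross2_scaleR_right zero_le_mult_iff)
  then have "cross2 v w' w = 0" using cross2_antisym[of v w w'] by linarith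
  then show "w' = w" using chord_circle_point[OF v w' w(1)] w(2) by auto
qed

lemma convex_cross2_nonneg: "convex {q. 0 \<le> cross2 v w q}"
proof -
  have "{q. 0 \<le> cross2 v w q} = {q. inner (\<i> * (w - v)) q \<ge> inner (\<i> * (w - v)) v}"
    by (auto simp: cross2_def inner_complex_def algebra_simps)
  then show ?thesis using convex_halfspace_ge by simp
qed

lemma psi_triangle_eqI:
  assumes ABC: "cmod A < 1" "cmod B < 1" "cmod C < 1"
    and v: "cmod v = 1" and w: "cmod w = 1" "w \<noteq> v"
    and X: "X \<in> {A, B, C}" "cross2 v w X = 0" and left: "\<forall>Y\<in>{A, B, C}. 0 \<le> cross2 v X Y"
  shows "psi (triangle A B C) v = w"
proof (rule psi_eqI[OF _ v w _ X(2)])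
  show "triangle A B C \<subseteq> ball 0 1"
    unfolding triangle_def by (rule hull_minimal) (use ABC in auto)
  show "X \<in> triangle A B C" using X(1) unfolding triangle_def by (rule hull_inc)
  have "cmod X < 1" using X(1) ABC by auto
  then obtain \<mu> where "0 < \<mu>" "X - v = \<mu> *\<^sub>R (w - v)"
    using chord_interior_point[OF v w _ X(2)] by metis
  with left have "\<forall>Y\<in>{A, B, C}. 0 \<le> cross2 v w Y"
    by (auto simp: cross2_scaleR_left zero_le_mult_iff)
  then have "triangle A B C \<subseteq> {q. 0 \<le> cross2 v w q}"
    unfolding triangle_def by (intro hull_minimal convex_cross2_nonneg) auto
  then show "\<forall>q\<in>triangle A B C. 0 \<le> cross2 v w q" by blast
qed

definition circle_param :: "real \<Rightarrow> complex" where
  "circle_param u = Complex (- 2 * u / (1 + u\<^sup>2)) ((1 - u\<^sup>2) / (1 + u\<^sup>2))"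

lemma one_plus_square_pos: "0 < 1 + (u::real)\<^sup>2"
  by (simp add: add_pos_nonneg)

lemma one_plus_square_nonzero [simp]: "1 + (u::real)\<^sup>2 \<noteq> 0"
  using one_plus_square_pos[of u] by linarith

lemma norm_circle_param [simp]: "cmod (circle_param u) = 1"
proof -
  have "(- 2 * u)\<^sup>2 + (1 - u\<^sup>2)\<^sup>2 = (1 + u\<^sup>2)\<^sup>2"
    by (simp add: power2_eq_square algebra_simps)
  then have "(- 2 * u / (1 + u\<^sup>2))\<^sup>2 + ((1 - u\<^sup>2) / (1 + u\<^sup>2))\<^sup>2 = 1"
    using one_plus_square_pos[of u] by (simp add: power_divide add_divide_distrib[symmetric])
  then show ?thesis unfolding circle_param_def cmod_def by simp
qed

lemma circle_param_inverse: "- Re (circle_param u) / (1 + Im (circle_param u)) = u"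
proof -
  have "1 + (1 - u\<^sup>2) / (1 + u\<^sup>2) = 2 / (1 + u\<^sup>2)"
    using one_plus_square_pos[of u] by (simp add: field_simps)
  then show ?thesis unfolding circle_param_def using one_plus_square_pos[of u] by simp
qed

lemma inj_circle_param: "inj circle_param"
  by (metis circle_param_inverse injI)

lemma circle_param_surj:
  assumes "cmod v = 1" "v \<noteq> Complex 0 (-1)"
  shows "v = circle_param (- Re v / (1 + Im v))"
proof -
  define u where "u = - Re v / (1 + Im v)"
  have V: "(Re v)\<^sup>2 = (1 - Im v) * (1 + Im v)"
    using assms(1) unfolding cmod_def by (simp add: algebra_simps power2_eq_square)
  have "1 + Im v \<noteq> 0"
    using V assms(2) by (auto simp: complex_eq_iff)
  then have "u\<^sup>2 = (1 - Im v) / (1 + Im v)"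
    unfolding u_def power_divide by (simp add: V power2_eq_square[of "1 + Im v"])
  with \<open>1 + Im v \<noteq> 0\<close> have "1 + u\<^sup>2 = 2 / (1 + Im v)" "1 - u\<^sup>2 = 2 * Im v / (1 + Im v)"
    by (simp_all add: field_simps)
  with \<open>1 + Im v \<noteq> 0\<close> show ?thesis
    unfolding circle_param_def u_def[symmetric] by (simp add: complex_eq_iff u_def)
qed

lemma circle_param_fraction:
  assumes "b \<noteq> 0"
  shows "circle_param (a / b) = Complex (- 2 * a * b / (a\<^sup>2 + b\<^sup>2)) ((b\<^sup>2 - a\<^sup>2) / (a\<^sup>2 + b\<^sup>2))"
proof -
  have sum: "1 + (a / b)\<^sup>2 = (a\<^sup>2 + b\<^sup>2) / b\<^sup>2" and diff: "1 - (a / b)\<^sup>2 = (b\<^sup>2 - a\<^sup>2) / b\<^sup>2"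
    using assms by (simp_all add: field_simps power_divide)
  have "a\<^sup>2 + b\<^sup>2 \<noteq> 0" using assms by simp
  then have "- 2 * (a / b) / ((a\<^sup>2 + b\<^sup>2) / b\<^sup>2) = - 2 * a * b / (a\<^sup>2 + b\<^sup>2)"
    using assms by (simp add: field_simps power2_eq_square)
  with assms show ?thesis unfolding circle_param_def sum diff by simp
qed

lemma cross2_circle_param:
  "cross2 (circle_param a) (circle_param b) X =
     2 * (b - a) * ((1 + a * b) + (a + b) * Re X - (1 - a * b) * Im X) / ((1 + a\<^sup>2) * (1 + b\<^sup>2))"
proof -
  define A B where "A = 1 + a\<^sup>2" and "B = 1 + b\<^sup>2"
  have "A \<noteq> 0" "B \<noteq> 0" unfolding A_def B_def by simp_all
  then show ?thesis
    unfolding cross2_def circle_param_def A_def[symmetric] B_def[symmetric]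
    by (simp add: field_simps) (simp add: A_def B_def power2_eq_square algebra_simps)
qed

lemma chord_line_zero:
  "(1 + a * b) + (a + b) * Re X - (1 - a * b) * Im X = 0 \<Longrightarrow>
    cross2 (circle_param a) (circle_param b) X = 0"
  unfolding cross2_circle_param by simp

lemma cross2_circle_param_left:
  "cross2 (circle_param u) X Y =
     ((Re X * Im Y - Im X * Re Y) * (1 + u\<^sup>2) + 2 * u * Im (Y - X) + (1 - u\<^sup>2) * Re (Y - X))
       / (1 + u\<^sup>2)"
proof -
  define A where "A = 1 + u\<^sup>2"
  have "A \<noteq> 0" unfolding A_def by simp
  then show ?thesis
    unfolding cross2_def circle_param_def A_def[symmetric] by (simp add: field_simps)
qed

lemma monic_quadratic_neg_between:
  fixes a b u p q :: real
  assumes u: "a \<le> u" "u \<le> b" and neg: "a\<^sup>2 + p * a + q < 0" "b\<^sup>2 + p * b + q < 0"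
  shows "u\<^sup>2 + p * u + q < 0"
proof -
  define m where "m = max (a\<^sup>2 + p * a + q) (b\<^sup>2 + p * b + q)"
  have "m < 0" using neg unfolding m_def by simp
  have "(b - u) * (a\<^sup>2 + p * a + q) \<le> (b - u) * m" "(u - a) * (b\<^sup>2 + p * b + q) \<le> (u - a) * m"
    using u unfolding m_def by (simp_all add: mult_left_mono)
  moreover have "0 \<le> (b - a) * (u - a) * (b - u)" using u by simp
  moreover have "(b - a) * (u\<^sup>2 + p * u + q) =
      (b - u) * (a\<^sup>2 + p * a + q) + (u - a) * (b\<^sup>2 + p * b + q) - (b - a) * (u - a) * (b - u)"
    by algebra
  ultimately have "(b - a) * (u\<^sup>2 + p * u + q) \<le> (b - a) * m"
    by (simp add: algebra_simps)
  then show ?thesis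
    using \<open>m < 0\<close> u neg by (cases "a = b") (auto simp: mult_le_cancel_left_pos)
qed

locale psi_triangle =
  fixes t :: real
  assumes t_pos: "0 < t" and t_less_1: "t < 1"
begin

definition k :: real where "k = (1 - t) / (1 + t)"
definition P :: complex where "P = Complex 0 t"
definition Q :: complex where "Q = Complex 0 (- t)"
definition R :: complex where "R = Complex (- k) 0"

abbreviation \<psi> :: "complex \<Rightarrow> complex" where "\<psi> \<equiv> psi (triangle P Q R)"

lemma k_pos: "0 < k" and k_less_1: "k < 1"
  using t_pos t_less_1 unfolding k_def by (auto simp: divide_less_eq)

lemma k_t: "k * (1 + t) = 1 - t"
  using t_pos unfolding k_def by simp

lemma k_square_less: "k\<^sup>2 < k"
  using k_pos k_less_1 by (simp add: power2_eq_square)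

lemma k_less_inverse: "k < 1 / k"
  using k_pos k_less_1 by (simp add: less_divide_eq power2_eq_square[symmetric] power_less_one_iff)

lemma vertices_in_disc: "cmod P < 1" "cmod Q < 1" "cmod R < 1"
  using t_pos t_less_1 k_pos k_less_1 unfolding P_def Q_def R_def by (simp_all add: cmod_def)

lemma circle_param_k: "circle_param k = Complex ((t\<^sup>2 - 1) / (t\<^sup>2 + 1)) (2 * t / (t\<^sup>2 + 1))"
proof -
  have "1 + t \<noteq> 0" using t_pos by simp
  have sum: "(1 - t)\<^sup>2 + (1 + t)\<^sup>2 = 2 * (t\<^sup>2 + 1)" and diff: "(1 + t)\<^sup>2 - (1 - t)\<^sup>2 = 2 * (2 * t)"
    and prod: "- 2 * (1 - t) * (1 + t) = 2 * (t\<^sup>2 - 1)"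
    by (simp_all add: power2_eq_square algebra_simps)
  show ?thesis unfolding k_def circle_param_fraction[OF \<open>1 + t \<noteq> 0\<close>] sum diff prod
    by (simp only: mult_divide_mult_cancel_left[OF numeral_neq_zero])
qed

lemma circle_param_inverse_k:
  "circle_param (1 / k) = Complex ((t\<^sup>2 - 1) / (t\<^sup>2 + 1)) (- (2 * t / (t\<^sup>2 + 1)))"
proof -
  have "1 - t \<noteq> 0" using t_less_1 by simp
  have inv: "1 / k = (1 + t) / (1 - t)" unfolding k_def by simp
  have sum: "(1 + t)\<^sup>2 + (1 - t)\<^sup>2 = 2 * (t\<^sup>2 + 1)" and diff: "(1 - t)\<^sup>2 - (1 + t)\<^sup>2 = 2 * (- (2 * t))"
    and prod: "- 2 * (1 + t) * (1 - t) = 2 * (t\<^sup>2 - 1)"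
    by (simp_all add: power2_eq_square algebra_simps)
  show ?thesis unfolding inv circle_param_fraction[OF \<open>1 - t \<noteq> 0\<close>] sum diff prod
    by (simp only: mult_divide_mult_cancel_left[OF numeral_neq_zero] minus_divide_left)
qed

definition orient_PR :: "real \<Rightarrow> real" where
  "orient_PR u = k * u\<^sup>2 - (1 - k) * u - k\<^sup>2"

definition orient_QR :: "real \<Rightarrow> real" where
  "orient_QR u = k\<^sup>2 * u\<^sup>2 + (1 - k) * u - k"

lemma cross2_PQ: "cross2 (circle_param u) P Q = - 4 * t * u / (1 + u\<^sup>2)"
  unfolding cross2_circle_param_left P_def Q_def by simp

lemma cross2_PR: "cross2 (circle_param u) P R = (1 + t) * orient_PR u / (1 + u\<^sup>2)"
proof -
  have "t * k * (1 + u\<^sup>2) - 2 * u * t - (1 - u\<^sup>2) * k = (1 + t) * orient_PR u"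
    using k_t unfolding orient_PR_def by algebra
  then show ?thesis unfolding cross2_circle_param_left P_def R_def by simp
qed

lemma cross2_QR: "cross2 (circle_param u) Q R = (1 + t) * orient_QR u / (1 + u\<^sup>2)"
proof -
  have "- t * k * (1 + u\<^sup>2) + 2 * u * t - (1 - u\<^sup>2) * k = (1 + t) * orient_QR u"
    using k_t unfolding orient_QR_def by algebra
  then show ?thesis unfolding cross2_circle_param_left Q_def R_def by simp
qed

definition chord_P :: "real \<Rightarrow> real" where "chord_P u = - k / u"
definition chord_Q :: "real \<Rightarrow> real" where "chord_Q u = - 1 / (k * u)"
definition chord_R :: "real \<Rightarrow> real" where "chord_R u = (1 - k * u) / (k - u)"

lemma cross2_chord_P: "u \<noteq> 0 \<Longrightarrow> cross2 (circle_param u) (circle_param (chord_P u)) P = 0"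
proof (rule chord_line_zero)
  assume "u \<noteq> 0"
  then have "u * chord_P u = - k" unfolding chord_P_def by simp
  with k_t show "(1 + u * chord_P u) + (u + chord_P u) * Re P - (1 - u * chord_P u) * Im P = 0"
    unfolding P_def by (simp add: algebra_simps)
qed

lemma cross2_chord_Q: "u \<noteq> 0 \<Longrightarrow> cross2 (circle_param u) (circle_param (chord_Q u)) Q = 0"
proof (rule chord_line_zero)
  assume "u \<noteq> 0"
  then have uq: "u * chord_Q u = - 1 / k" unfolding chord_Q_def by simp
  have "k * (1 - 1 / k + (1 + 1 / k) * t) = k - 1 + (k + 1) * t"
    using k_pos by (simp add: algebra_simps)
  also have "\<dots> = 0" using k_t by (simp add: algebra_simps)
  finally show "(1 + u * chord_Q u) + (u + chord_Q u) * Re Q - (1 - u * chord_Q u) * Im Q = 0"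
    using k_pos unfolding Q_def uq by simp
qed

lemma cross2_chord_R: "u \<noteq> k \<Longrightarrow> cross2 (circle_param u) (circle_param (chord_R u)) R = 0"
proof (rule chord_line_zero)
  assume "u \<noteq> k"
  then have "chord_R u * (k - u) = 1 - k * u" unfolding chord_R_def by simp
  then show "(1 + u * chord_R u) + (u + chord_R u) * Re R - (1 - u * chord_R u) * Im R = 0"
    unfolding R_def by (simp add: algebra_simps)
qed

lemma circle_param_chord_P_ne:
  assumes "u \<noteq> 0" shows "circle_param (chord_P u) \<noteq> circle_param u"
proof
  assume "circle_param (chord_P u) = circle_param u"
  then have "- k = u * u" using assms unfolding chord_P_def inj_eq[OF inj_circle_param]
    by (auto simp: field_simps)
  with k_pos zero_le_square[of u] show False by linarith
qed

lemma circle_param_chord_Q_ne: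
  assumes "u \<noteq> 0" shows "circle_param (chord_Q u) \<noteq> circle_param u"
proof
  assume "circle_param (chord_Q u) = circle_param u"
  then have "- 1 = k * (u * u)" using assms k_pos unfolding chord_Q_def inj_eq[OF inj_circle_param]
    by (auto simp: field_simps)
  moreover have "0 \<le> k * (u * u)" using k_pos by simp
  ultimately show False by linarith
qed

lemma circle_param_chord_R_ne:
  assumes "u \<noteq> k" shows "circle_param (chord_R u) \<noteq> circle_param u"
proof
  assume "circle_param (chord_R u) = circle_param u"
  then have "1 - k * u = u * (k - u)" using assms unfolding chord_R_def inj_eq[OF inj_circle_param]
    by (simp add: divide_eq_eq)
  then have "(u - k)\<^sup>2 + (1 - k * k) = 0" by (simp add: power2_eq_square algebra_simps)
  moreover have "k * k < 1" using k_square_less[unfolded power2_eq_square] k_less_1 by linarith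
  ultimately show False using zero_le_power2[of "u - k"] by linarith
qed

lemma psi_chord_P:
  assumes "u < 0" "0 \<le> orient_PR u"
  shows "\<psi> (circle_param u) = circle_param (chord_P u)"
proof (rule psi_triangle_eqI[OF vertices_in_disc norm_circle_param norm_circle_param])
  show "circle_param (chord_P u) \<noteq> circle_param u" "cross2 (circle_param u) (circle_param (chord_P u)) P = 0"
    using assms(1) circle_param_chord_P_ne cross2_chord_P by auto
  show "\<forall>Y\<in>{P, Q, R}. 0 \<le> cross2 (circle_param u) P Y"
    using assms t_pos one_plus_square_pos[of u]
    by (simp add: cross2_PQ cross2_PR mult_pos_neg divide_nonpos_pos less_imp_le)
qed simp

lemma psi_chord_Q:
  assumes "0 < u" "0 \<le> orient_QR u"
  shows "\<psi> (circle_param u) = circle_param (chord_Q u)"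
proof (rule psi_triangle_eqI[OF vertices_in_disc norm_circle_param norm_circle_param])
  show "circle_param (chord_Q u) \<noteq> circle_param u" "cross2 (circle_param u) (circle_param (chord_Q u)) Q = 0"
    using assms(1) circle_param_chord_Q_ne cross2_chord_Q by auto
  show "\<forall>Y\<in>{P, Q, R}. 0 \<le> cross2 (circle_param u) Q Y"
    using assms t_pos one_plus_square_pos[of u]
    by (simp add: cross2_antisym[of _ Q P] cross2_PQ cross2_QR)
qed simp

lemma psi_chord_R:
  assumes "u \<noteq> k" "orient_PR u \<le> 0" "orient_QR u \<le> 0"
  shows "\<psi> (circle_param u) = circle_param (chord_R u)"
proof (rule psi_triangle_eqI[OF vertices_in_disc norm_circle_param norm_circle_param])
  show "circle_param (chord_R u) \<noteq> circle_param u" "cross2 (circle_param u) (circle_param (chord_R u)) R = 0"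
    using assms(1) circle_param_chord_R_ne cross2_chord_R by auto
  show "\<forall>Y\<in>{P, Q, R}. 0 \<le> cross2 (circle_param u) R Y"
    using assms t_pos one_plus_square_pos[of u]
    by (simp add: cross2_antisym[of _ R] cross2_PR cross2_QR mult_nonneg_nonpos divide_nonpos_pos)
qed simp

end

locale thin_psi_triangle = psi_triangle +
  assumes t_gt: "0.8 < t"
begin

lemma k_small: "k < 1/9"
  using t_gt unfolding k_def by (simp add: divide_less_eq)

lemma orient_QR_neg: assumes "u < 0" "orient_PR u < 0" shows "orient_QR u < 0"
proof -
  have "0 < (1 - k) * (- u)" using assms(1) k_less_1 by (intro mult_pos_pos) auto
  then have "k * u\<^sup>2 < k\<^sup>2" using assms(2) unfolding orient_PR_def by (simp add: algebra_simps)
  then have "k * (k * u\<^sup>2) < k * k\<^sup>2" using k_pos by simp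
  moreover have "k * k\<^sup>2 < k * 1"
    using k_pos k_less_1 by (intro mult_strict_left_mono) (auto simp: power_less_one_iff)
  moreover have "(1 - k) * u < 0" using assms(1) k_less_1 by (intro mult_pos_neg) auto
  ultimately show ?thesis unfolding orient_QR_def by (simp add: power2_eq_square algebra_simps)
qed

lemma orient_PR_neg: assumes "0 < u" "orient_QR u < 0" shows "orient_PR u < 0"
proof -
  have "0 \<le> k\<^sup>2 * u\<^sup>2" by simp
  then have "(1 - k) * u < k" using assms(2) unfolding orient_QR_def by linarith
  moreover have "u / 2 < (1 - k) * u" using assms(1) k_small by simp
  ultimately have "u < 2 * k" by linarith
  then have "u * u < (2 * k) * (2 * k)" using assms(1) by (intro mult_strict_mono) auto
  then have "k * u\<^sup>2 < k * (4 * k * k)" using k_pos by (simp add: power2_eq_square)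
  also have "\<dots> < k\<^sup>2" using k_pos k_small by (simp add: power2_eq_square)
  finally have "k * u\<^sup>2 < k\<^sup>2" .
  moreover have "0 < (1 - k) * u" using assms(1) k_less_1 by simp
  ultimately show ?thesis unfolding orient_PR_def by linarith
qed

text \<open>The parameter of \<open>\<psi> (circle_param u)\<close>, see \<open>psi_step\<close>; its value at \<open>k\<close>, where
  \<open>\<psi>\<close> gives \<open>(0,-1)\<close>, is junk. Below, \<open>I0, \<dots>, I4\<close> are the arcs \<open>(-1,0)\<close>, \<open>(k,1/k)\<close>,
  \<open>(-\<infinity>,-1)\<close>, \<open>(0,k)\<close>, \<open>(1/k,\<infinity>)\<close>, and \<open>step\<close> maps each of them into the next
  (and \<open>I4\<close> into \<open>I0\<close>).\<close>

definition step :: "real \<Rightarrow> real" where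
  "step u = (if u < 0 \<and> 0 \<le> orient_PR u then chord_P u
             else if 0 < u \<and> 0 \<le> orient_QR u then chord_Q u else chord_R u)"

lemma psi_step: assumes "u \<noteq> k" shows "\<psi> (circle_param u) = circle_param (step u)"
proof (cases "u < 0 \<and> 0 \<le> orient_PR u")
  case True
  then show ?thesis by (simp add: step_def psi_chord_P)
next
  case not_P: False
  show ?thesis
  proof (cases "0 < u \<and> 0 \<le> orient_QR u")
    case True
    with not_P show ?thesis by (simp add: step_def psi_chord_Q)
  next
    case not_Q: False
    have "orient_PR u \<le> 0 \<and> orient_QR u \<le> 0"
      using not_P not_Q orient_QR_neg orient_PR_neg k_pos
      by (cases u "0::real" rule: linorder_cases)
        (auto simp: not_le less_imp_le orient_PR_def[of 0] orient_QR_def[of 0])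
    moreover have "step u = chord_R u"
      unfolding step_def by (simp only: if_not_P[OF not_P] if_not_P[OF not_Q])
    ultimately show ?thesis using assms by (simp add: psi_chord_R)
  qed
qed

lemma step_neg: "u < 0 \<Longrightarrow> step u = (if 0 \<le> orient_PR u then chord_P u else chord_R u)"
  and step_pos: "0 < u \<Longrightarrow> step u = (if 0 \<le> orient_QR u then chord_Q u else chord_R u)"
  by (simp_all add: step_def)

lemma step_from_I0:
  assumes "-1 < u" "u < 0" shows "k < step u" "step u < 1 / k"
proof -
  have "k < chord_P u \<and> chord_P u < 1 / k" if "0 \<le> orient_PR u"
  proof -
    have "u * u < - u" using assms mult_strict_left_mono_neg[of "-1" u u] by simp
    then have "k * (u * u) < k * (- u)" using k_pos by (intro mult_strict_left_mono)
    then have "k\<^sup>2 < - u" using that unfolding orient_PR_def power2_eq_square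
      by (simp add: algebra_simps)
    moreover have "k * (- u) < k" using mult_strict_left_mono[of "- u" 1 k] assms k_pos by simp
    ultimately show ?thesis
      unfolding chord_P_def minus_divide_right[symmetric] using assms k_pos
      by (simp add: field_simps power2_eq_square)
  qed
  moreover have "k < chord_R u \<and> chord_R u < 1 / k"
  proof -
    have "k * k < 1" using k_square_less[unfolded power2_eq_square] k_less_1 by linarith
    then have "k * (k - u) < 1 - k * u" "k * (1 - k * u) < k - u"
      using assms mult_strict_right_mono_neg[of "k * k" 1 u] by (auto simp: algebra_simps)
    moreover have "0 < k - u" using assms k_pos by simp
    ultimately show ?thesis using k_pos unfolding chord_R_def by (simp add: field_simps)
  qed
  ultimately show "k < step u" "step u < 1 / k" using step_neg[OF assms(2)] by auto
qed

lemma step_from_I1: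
  assumes "k < u" "u < 1 / k" shows "step u < -1"
proof -
  have u: "0 < u" "k * u < 1" using assms k_pos by (auto simp: less_divide_eq mult.commute)
  have "chord_Q u < -1"
    using u k_pos unfolding chord_Q_def by (simp add: field_simps)
  moreover have "chord_R u < -1" if "orient_QR u < 0"
  proof -
    have "0 \<le> k\<^sup>2 * u\<^sup>2" by simp
    then have "(1 - k) * u < k" using that unfolding orient_QR_def by linarith
    have "u < 1"
    proof (rule ccontr)
      assume "\<not> u < 1"
      then have "1 - k \<le> (1 - k) * u" using mult_left_mono[of 1 u "1 - k"] k_less_1 by simp
      with \<open>(1 - k) * u < k\<close> k_small show False by linarith
    qed
    moreover have "u * k < 1 * k" using \<open>u < 1\<close> k_pos by (rule mult_strict_right_mono)
    ultimately show ?thesis using assms(1) unfolding chord_R_def by (simp add: field_simps)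
  qed
  ultimately show ?thesis using step_pos[OF u(1)] by auto
qed

lemma step_from_I2:
  assumes "u < -1" shows "step u = chord_P u" "0 < chord_P u" "chord_P u < k"
proof -
  have "(1 - k) * 1 < (1 - k) * (- u)"
    by (rule mult_strict_left_mono) (use assms k_less_1 in auto)
  then have "1 - k < - ((1 - k) * u)" by simp
  moreover have "0 \<le> k * u\<^sup>2" using k_pos by simp
  ultimately have "0 \<le> orient_PR u" using k_square_less k_small unfolding orient_PR_def by linarith
  then show "step u = chord_P u" using assms step_neg by simp
  have "u * k < (- 1) * k" using assms k_pos by (rule mult_strict_right_mono)
  then show "0 < chord_P u" "chord_P u < k"
    using assms k_pos unfolding chord_P_def by (simp_all add: field_simps)
qed

lemma step_from_I3:
  assumes "0 < u" "u < k" shows "step u = chord_R u" "1 / k < chord_R u"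
proof -
  have "u\<^sup>2 \<le> 1" using assms k_less_1 power_le_one[of u 2] by simp
  then have "k\<^sup>2 * u\<^sup>2 \<le> k\<^sup>2 * 1" by (intro mult_left_mono) auto
  moreover have "(1 - k) * u < (1 - k) * k" using assms k_less_1 by (intro mult_strict_left_mono) auto
  ultimately have "orient_QR u < 0" unfolding orient_QR_def by (simp add: algebra_simps power2_eq_square)
  then show "step u = chord_R u" using assms step_pos by simp
  have "k * k < 1" using k_square_less[unfolded power2_eq_square] k_less_1 by linarith
  then have "k * (k * u) < u" using assms mult_strict_right_mono[of "k * k" 1 u] by (simp add: algebra_simps)
  then show "1 / k < chord_R u" using assms k_pos unfolding chord_R_def by (simp add: field_simps)
qed

lemma step_from_I4:
  assumes "1 / k < u" shows "step u = chord_Q u" "-1 < chord_Q u" "chord_Q u < 0"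
proof -
  have "1 < u * k" using assms k_pos by (simp add: divide_less_eq)
  then have ku: "1 < k * u" "0 < u" using k_pos zero_less_mult_pos2[of u k] by (simp_all add: mult.commute)
  then have "1 < (k * u)\<^sup>2" by (simp add: one_less_power)
  moreover have "0 < (1 - k) * u" using ku k_less_1 by simp
  ultimately have "0 \<le> orient_QR u" using k_less_1 unfolding orient_QR_def by (simp add: power_mult_distrib)
  then show "step u = chord_Q u" using ku step_pos by simp
  show "-1 < chord_Q u" "chord_Q u < 0" using ku unfolding chord_Q_def by (simp_all add: field_simps)
qed

lemma step_avoids_endpoints:
  assumes "u \<notin> {-1, 0, k, 1 / k}" shows "step u \<notin> {-1, 0, k, 1 / k}"
proof -
  have "0 < k" "k < 1 / k" using k_pos k_less_inverse by auto
  with assms consider "u < -1" | "-1 < u" "u < 0" | "0 < u" "u < k" | "k < u" "u < 1 / k" | "1 / k < u"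
    by (metis insert_iff linorder_neqE_linordered_idom)
  then show ?thesis
  proof cases
    case 1
    then show ?thesis using step_from_I2[OF 1] \<open>k < 1 / k\<close> by auto
  next
    case 2
    then show ?thesis using step_from_I0[OF 2] \<open>0 < k\<close> by auto
  next
    case 3
    then show ?thesis using step_from_I3[OF 3] \<open>0 < k\<close> \<open>k < 1 / k\<close> by auto
  next
    case 4
    then show ?thesis using step_from_I1[OF 4] \<open>0 < k\<close> \<open>k < 1 / k\<close> by auto
  next
    case 5
    then show ?thesis using step_from_I4[OF 5] \<open>0 < k\<close> \<open>k < 1 / k\<close> by auto
  qed
qed

lemma funpow_step_avoids_endpoints:
  "u \<notin> {-1, 0, k, 1 / k} \<Longrightarrow> (step ^^ n) u \<notin> {-1, 0, k, 1 / k}"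
  by (induction n) (simp_all add: step_avoids_endpoints del: insert_iff)

lemma funpow_psi_step:
  assumes "u \<notin> {-1, 0, k, 1 / k}"
  shows "(\<psi> ^^ n) (circle_param u) = circle_param ((step ^^ n) u)"
proof (induction n)
  case (Suc n)
  have "(step ^^ n) u \<noteq> k" using funpow_step_avoids_endpoints[OF assms, of n] by auto
  with Suc show ?case by (simp add: psi_step)
qed simp

lemma chord_Q_chord_P: "u \<noteq> 0 \<Longrightarrow> chord_Q (chord_P u) = u / k\<^sup>2"
  using k_pos unfolding chord_P_def chord_Q_def by (simp add: power2_eq_square)

lemma chord_R_chord_P:
  assumes "u \<noteq> 0" "u \<noteq> -1" shows "chord_R (chord_P u) = (k\<^sup>2 + u) / (k * (1 + u))"
proof -
  have "1 - k * chord_P u = (k\<^sup>2 + u) / u" "k - chord_P u = k * (1 + u) / u"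
    using assms unfolding chord_P_def by (simp_all add: field_simps power2_eq_square)
  then show ?thesis using assms unfolding chord_R_def by simp
qed

lemma chord_Q_chord_R:
  assumes "u < 0" shows "chord_Q (chord_R u) = (u - k) / (k * (1 - k * u))"
proof -
  have "k \<noteq> 0" "k - u \<noteq> 0" "1 - k * u \<noteq> 0"
    using assms k_pos mult_pos_neg[OF k_pos assms] by auto
  then show ?thesis unfolding chord_R_def chord_Q_def by (simp add: field_simps)
qed

lemma chord_R_chord_R:
  assumes "u \<noteq> k" shows "chord_R (chord_R u) = u"
proof -
  have "1 - k * chord_R u = u * (k\<^sup>2 - 1) / (k - u)" "k - chord_R u = (k\<^sup>2 - 1) / (k - u)"
    using assms unfolding chord_R_def by (simp_all add: field_simps power2_eq_square)
  moreover have "k\<^sup>2 - 1 \<noteq> 0" using k_square_less k_less_1 by linarith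
  ultimately show ?thesis using assms unfolding chord_R_def by simp
qed

lemma funpow3_step_from_I2:
  assumes "u < -1" shows "(step ^^ 3) u = - (1 + u) / (k\<^sup>2 + u)"
proof -
  have "(step ^^ 3) u = chord_Q (chord_R (chord_P u))"
    using step_from_I2[OF assms] step_from_I3 step_from_I4 by (simp add: numeral_eq_Suc)
  moreover have "k \<noteq> 0" "k\<^sup>2 + u \<noteq> 0" "1 + u \<noteq> 0" using assms k_pos k_square_less k_less_1 by auto
  ultimately show ?thesis using assms unfolding chord_Q_def
    by (simp add: chord_R_chord_P)
qed

text \<open>From \<open>u \<in> I0\<close> the orbit uses the chord through \<open>P\<close> or \<open>R\<close>, then through \<open>Q\<close> or \<open>R\<close>,
  then through \<open>P\<close>, \<open>R\<close>, \<open>Q\<close>; the hypothesis \<open>cycle\<close> below is the fixed point equation of the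
  last three steps. In case PQ it becomes the quadratic of the next lemma, whose roots avoid
  the interval that the two tangency conditions force on \<open>u\<close>.\<close>

lemma PQ_quadratic_neg:
  assumes "- 1 / 2 \<le> u" "u \<le> - k\<^sup>2 - k ^ 3 / 2"
  shows "u\<^sup>2 + (1 + k ^ 4) * u + k\<^sup>2 < 0"
proof (rule monic_quadratic_neg_between[OF assms])
  have "(- 1 / 2)\<^sup>2 + (1 + k ^ 4) * (- 1 / 2) + k\<^sup>2 = k\<^sup>2 - 1 / 4 - k ^ 4 / 2" by algebra
  then show "(- 1 / 2)\<^sup>2 + (1 + k ^ 4) * (- 1 / 2) + k\<^sup>2 < 0"
    using k_square_less k_small zero_le_power[of k 4] k_pos by linarith
  have "(- k\<^sup>2 - k ^ 3 / 2)\<^sup>2 + (1 + k ^ 4) * (- k\<^sup>2 - k ^ 3 / 2) + k\<^sup>2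
      = k ^ 3 * (k + k\<^sup>2 - 1 / 2) - (3 / 4 * k ^ 6 + k ^ 7 / 2)" by algebra
  moreover have "k ^ 3 * (k + k\<^sup>2 - 1 / 2) < 0"
    using k_pos k_square_less k_small by (intro mult_pos_neg) auto
  moreover have "0 \<le> 3 / 4 * k ^ 6 + k ^ 7 / 2" using k_pos by simp
  ultimately show "(- k\<^sup>2 - k ^ 3 / 2)\<^sup>2 + (1 + k ^ 4) * (- k\<^sup>2 - k ^ 3 / 2) + k\<^sup>2 < 0"
    by linarith
qed

lemma no_five_cycle_PQ:
  assumes u: "-1 < u" "u < 0" and PR: "0 \<le> orient_PR u" and QR: "0 \<le> orient_QR (chord_P u)"
    and cycle: "u * (k\<^sup>2 + chord_Q (chord_P u)) = - (1 + chord_Q (chord_P u))"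
  shows False
proof -
  have "k\<^sup>2 * chord_Q (chord_P u) = u" using chord_Q_chord_P u k_pos by simp
  with cycle have h: "u\<^sup>2 + (1 + k ^ 4) * u + k\<^sup>2 = 0" by algebra
  have "u * chord_P u = - k" using u unfolding chord_P_def by simp
  then have "u\<^sup>2 * orient_QR (chord_P u) = k * (k ^ 3 - (1 - k) * u - u\<^sup>2)"
    unfolding orient_QR_def by algebra
  moreover have "0 \<le> u\<^sup>2 * orient_QR (chord_P u)" using QR by simp
  ultimately have QR': "0 \<le> k ^ 3 - (1 - k) * u - u\<^sup>2" using k_pos by (simp add: zero_le_mult_iff)
  have "- 1 / 2 \<le> u"
  proof -
    have "k * (k + k\<^sup>2 + u + k ^ 3 * u) = (k ^ 3 - (1 - k) * u - u\<^sup>2) + (u\<^sup>2 + (1 + k ^ 4) * u + k\<^sup>2)"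
      by algebra
    then have "0 \<le> k * (k + k\<^sup>2 + u + k ^ 3 * u)" using QR' h by linarith
    then have "0 \<le> k + k\<^sup>2 + u + k ^ 3 * u" using k_pos by (simp add: zero_le_mult_iff)
    moreover have "k ^ 3 * u < 0" using k_pos u by (simp add: mult_pos_neg)
    ultimately show ?thesis using k_square_less k_small by linarith
  qed
  moreover have "u \<le> - k\<^sup>2 - k ^ 3 / 2"
  proof -
    have "orient_PR u = - u - k ^ 5 * u - k\<^sup>2 - k ^ 3" using h unfolding orient_PR_def by algebra
    moreover have "k ^ 5 * (-1) < k ^ 5 * u" using u k_pos by (intro mult_strict_left_mono) auto
    moreover have "k ^ 3 * k\<^sup>2 \<le> k ^ 3 * (1 / 2)" using k_pos k_square_less k_small by (intro mult_left_mono) auto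
    then have "k ^ 5 \<le> k ^ 3 / 2" by (simp add: power_add[symmetric])
    ultimately show ?thesis using PR by linarith
  qed
  ultimately have "u\<^sup>2 + (1 + k ^ 4) * u + k\<^sup>2 < 0" by (rule PQ_quadratic_neg)
  with h show False by simp
qed

lemma no_five_cycle_PR:
  assumes u: "-1 < u" "u < 0" and QR: "orient_QR (chord_P u) < 0"
    and cycle: "u * (k\<^sup>2 + chord_R (chord_P u)) = - (1 + chord_R (chord_P u))"
  shows False
proof -
  have "k * (1 + u) * chord_R (chord_P u) = k\<^sup>2 + u" using chord_R_chord_P u k_pos by simp
  with cycle have "(1 + u) * (k ^ 3 * u + u + k + k\<^sup>2) = 0" by algebra
  then have E: "k ^ 3 * u + u + k + k\<^sup>2 = 0" using u by simp
  have "k ^ 3 * u < 0" using k_pos u by (simp add: mult_pos_neg)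
  with E have lower: "- 1 / 2 < u" using k_square_less k_small by linarith
  have p: "0 < chord_P u" "u * chord_P u = - k"
    using u k_pos divide_neg_neg[of "- k" u] unfolding chord_P_def by simp_all
  have "0 \<le> k\<^sup>2 * (chord_P u)\<^sup>2" by simp
  with QR have "(1 - k) * chord_P u < k" unfolding orient_QR_def by linarith
  moreover have "0 < (1 / 2 - k) * chord_P u" using p k_small by simp
  ultimately have "chord_P u < 2 * k" by (simp add: algebra_simps)
  then have "u * (2 * k) < u * chord_P u" using u(2) by (rule mult_strict_left_mono_neg)
  then have "k * (2 * u + 1) < 0" using p by (simp add: algebra_simps)
  then show False using lower k_pos by (simp add: mult_less_0_iff)
qed

lemma no_five_cycle_RQ:
  assumes u: "-1 < u" "u < 0" and PR: "orient_PR u < 0"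
    and cycle: "u * (k\<^sup>2 + chord_Q (chord_R u)) = - (1 + chord_Q (chord_R u))"
  shows False
proof -
  have "0 < 1 - k * u" using k_pos u mult_pos_neg[OF k_pos u(2)] by linarith
  then have "k * (1 - k * u) * chord_Q (chord_R u) = u - k" using chord_Q_chord_R u k_pos by simp
  with cycle have "u * (1 - k\<^sup>2) * ((1 + k\<^sup>2) * u + (1 - k)) = 0" by algebra
  moreover have "1 - k\<^sup>2 \<noteq> 0" using k_square_less k_less_1 by linarith
  ultimately have "(1 + k\<^sup>2) * u + (1 - k) = 0" using u by simp
  then have E: "u + k\<^sup>2 * u + 1 - k = 0" by (simp add: algebra_simps)
  have "k\<^sup>2 * (-1) < k\<^sup>2 * u" using u k_pos by (intro mult_strict_left_mono) auto
  with E have "1 < - 2 * u" using k_square_less k_small by linarith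
  then have "(1 - k) * 1 < (1 - k) * (- 2 * u)" using k_less_1 by (intro mult_strict_left_mono) auto
  then have "1 - k < - 2 * ((1 - k) * u)" by simp
  moreover have "0 \<le> k * u\<^sup>2" using k_pos by simp
  ultimately have "0 < orient_PR u" using k_square_less k_small unfolding orient_PR_def by linarith
  with PR show False by simp
qed

lemma no_period5_from_I0:
  assumes u: "-1 < u" "u < 0" shows "(step ^^ 5) u \<noteq> u"
proof
  assume fixed: "(step ^^ 5) u = u"
  define u1 u2 where "u1 = step u" and "u2 = step u1"
  have u1: "k < u1" "u1 < 1 / k" unfolding u1_def using step_from_I0[OF u] by auto
  have u2: "u2 < -1" unfolding u2_def using step_from_I1[OF u1] .
  have "u = - (1 + u2) / (k\<^sup>2 + u2)"
    using fixed funpow3_step_from_I2[OF u2] unfolding u1_def u2_def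
    by (simp add: numeral_eq_Suc funpow_swap1)
  moreover have "k\<^sup>2 + u2 \<noteq> 0" using u2 k_square_less k_less_1 by linarith
  ultimately have cycle: "u * (k\<^sup>2 + u2) = - (1 + u2)" by (simp add: eq_divide_eq)
  have u1_eq: "u1 = (if 0 \<le> orient_PR u then chord_P u else chord_R u)"
    unfolding u1_def using step_neg u(2) by simp
  have u2_eq: "u2 = (if 0 \<le> orient_QR u1 then chord_Q u1 else chord_R u1)"
    unfolding u2_def using step_pos u1(1) k_pos by simp
  consider "0 \<le> orient_PR u" "0 \<le> orient_QR u1" | "0 \<le> orient_PR u" "orient_QR u1 < 0"
    | "orient_PR u < 0" "0 \<le> orient_QR u1" | "orient_PR u < 0" "orient_QR u1 < 0" by linarith
  then show False
  proof cases
    case 1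
    with cycle u1_eq u2_eq show False by (intro no_five_cycle_PQ[OF u]) simp_all
  next
    case 2
    with cycle u1_eq u2_eq show False by (intro no_five_cycle_PR[OF u]) simp_all
  next
    case 3
    with cycle u1_eq u2_eq show False by (intro no_five_cycle_RQ[OF u]) simp_all
  next
    case 4
    then have "u2 = u" using u1_eq u2_eq chord_R_chord_R[of u] u k_pos by simp
    with u u2 show False by simp
  qed
qed

lemma reaches_I0:
  assumes "u \<notin> {-1, 0, k, 1 / k}" shows "\<exists>j. -1 < (step ^^ j) u \<and> (step ^^ j) u < 0"
proof -
  let ?reaches = "\<lambda>x. \<exists>j. -1 < (step ^^ j) x \<and> (step ^^ j) x < 0"
  have pull_back: "?reaches (step x) \<Longrightarrow> ?reaches x" for x by (metis comp_apply funpow_Suc_right)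
  have from_I4: "?reaches x" if "1 / k < x" for x
    using pull_back step_from_I4[OF that] by (metis funpow_0)
  have from_I3: "?reaches x" if "0 < x" "x < k" for x
    using pull_back from_I4 step_from_I3[OF that] by metis
  have from_I2: "?reaches x" if "x < -1" for x
    using pull_back from_I3 step_from_I2[OF that] by metis
  have from_I1: "?reaches x" if "k < x" "x < 1 / k" for x
    using pull_back from_I2 step_from_I1[OF that] by metis
  have "?reaches x" if "-1 < x" "x < 0" for x
    using that by (metis funpow_0)
  with assms k_pos k_less_inverse from_I1 from_I2 from_I3 from_I4 show ?thesis
    by (metis insert_iff linorder_neqE_linordered_idom)
qed

lemma step_no_period5:
  assumes "u \<notin> {-1, 0, k, 1 / k}" shows "(step ^^ 5) u \<noteq> u"
proof
  assume fixed: "(step ^^ 5) u = u"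
  obtain j where j: "-1 < (step ^^ j) u" "(step ^^ j) u < 0" using reaches_I0[OF assms] by blast
  have "(step ^^ 5) ((step ^^ j) u) = (step ^^ j) ((step ^^ 5) u)"
    by (metis add.commute comp_apply funpow_add)
  with fixed have "(step ^^ 5) ((step ^^ j) u) = (step ^^ j) u" by simp
  with no_period5_from_I0[OF j] show False by contradiction
qed

lemma period5_point:
  assumes "cmod v = 1" "(\<psi> ^^ 5) v = v"
  shows "v = Complex 0 (-1) \<or> v \<in> circle_param ` {-1, 0, k, 1 / k}"
proof (cases "v = Complex 0 (-1)")
  case False
  then obtain u where v: "v = circle_param u" using circle_param_surj assms(1) by blast
  have "u \<in> {-1, 0, k, 1 / k}"
  proof (rule ccontr)
    assume u: "u \<notin> {-1, 0, k, 1 / k}"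
    have "circle_param ((step ^^ 5) u) = circle_param u"
      using assms(2) funpow_psi_step[OF u] v by simp
    with step_no_period5[OF u] show False by (simp add: inj_eq[OF inj_circle_param])
  qed
  with v show ?thesis by blast
qed simp

end

theorem lemma6p13:
  fixes t :: real and v :: complex
  assumes "0.8 < t" and "t < 1"
    and "cmod v = 1"
    and "(psi (triangle (Complex 0 t) (Complex 0 (-t)) (Complex ((t - 1) / (t + 1)) 0)) ^^ 5) v = v"
  shows "v \<in> {Complex 1 0,
               Complex ((t^2 - 1) / (t^2 + 1)) (2 * t / (t^2 + 1)),
               Complex 0 (-1),
               Complex 0 1,
               Complex ((t^2 - 1) / (t^2 + 1)) (- (2 * t / (t^2 + 1)))}"
proof -
  interpret thin_psi_triangle t
    using assms(1,2) by unfold_locales auto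
  have "(t - 1) / (t + 1) = - k" unfolding k_def by (simp add: minus_divide_left add.commute)
  then have "(\<psi> ^^ 5) v = v" using assms(4) unfolding P_def Q_def R_def by simp
  then have "v = Complex 0 (-1) \<or> v \<in> circle_param ` {-1, 0, k, 1 / k}"
    using period5_point assms(3) by blast
  moreover have "circle_param (-1) = Complex 1 0" "circle_param 0 = Complex 0 1"
    by (simp_all add: circle_param_def)
  ultimately show ?thesis using circle_param_k circle_param_inverse_k by auto
qed

end
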